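(* If $f:T^2\to\mathbb R^4$ is a conformal immersion and $\alpha\in\mathrm{span}_{\mathbb H}\{1,f\}\subset H^0$ (nowhere vanishing where defined), then the Darboux transform of $f$ given by $\alpha$ is a constant map $\hat f=c$ with $c\in\mathbb H\cup\{\infty\}$. In particular, if the complex dimension of the space of global holomorphic sections is minimal, that is $\dim_{\mathbb C}H^0=4$, then every Darboux transform given by the trivial multiplier is constant.
   Context: Identify $\mathbb R^4=\mathbb H$, $S^4=\mathbb{HP}^1=\mathbb H\cup\{\infty\}$ with $x\mapsto\begin{pmatrix}x\\1\end{pmatrix}\mathbb H$ and $\infty=\begin{pmatrix}1\\0\end{pmatrix}\mathbb H$. Let $T^2=\mathbb C/\Gamma$ and view $f$ as a $\Gamma$-periodic map on $\mathbb C$ with left normal $N$ ($*df=N\,df$). A map $\alpha:\mathbb C\to\mathbb H$ is holomorphic if $*d\alpha=N\,d\alpha$; $H^0$ denotes the space of $\Gamma$-periodic holomorphic maps (trivial multiplier), a right quaternionic (hence complex) vector space; $1,f\in H^0$. Darboux transform given by a holomorphic section with multiplier $\alpha$: define $\hat T$ by $d\alpha=-df\,\hat T\alpha$, $\nu=\hat T\alpha$, and set $\hat f=\begin{pmatrix}f\nu+\alpha\\ \nu\end{pmatrix}\mathbb H\in\mathbb{HP}^1$ (equal to $f+\hat T^{-1}$ where $\hat T\ne0$; if $\alpha$ is constant then $\hat T=0$ and $\hat f=\infty$). *)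

theory Defs
  imports "HOL-Analysis.Analysis"
begin

text \<open>Quaternions H modelled as C x C (Cayley-Dickson): (a,b) stands for a + b j,
  with a, b complex.  The norm of the product space is the quaternionic norm.\<close>
type_synonym quat = "complex \<times> complex"

definition qmul :: "quat \<Rightarrow> quat \<Rightarrow> quat" where
  "qmul p q = (fst p * fst q - snd p * cnj (snd q), fst p * snd q + snd p * cnj (fst q))"

definition qone :: quat where "qone = (1, 0)"

text \<open>embedding of a complex number c into H (c acts on the right as complex scalar)\<close>
definition qcplx :: "complex \<Rightarrow> quat" where "qcplx c = (c, 0)"

definition dx :: "(complex \<Rightarrow> quat) \<Rightarrow> complex \<Rightarrow> quat" where
  "dx g z = frechet_derivative g (at z) 1"
definition dy :: "(complex \<Rightarrow> quat) \<Rightarrow> complex \<Rightarrow> quat" where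
  "dy g z = frechet_derivative g (at z) \<i>"

definition lattice :: "complex \<Rightarrow> complex \<Rightarrow> bool" where
  "lattice w1 w2 \<longleftrightarrow> Im (w2 * cnj w1) \<noteq> 0"

definition periodic :: "complex \<Rightarrow> complex \<Rightarrow> (complex \<Rightarrow> 'a) \<Rightarrow> bool" where
  "periodic w1 w2 g \<longleftrightarrow> (\<forall>z. g (z + w1) = g z \<and> g (z + w2) = g z)"

text \<open>f: T^2 = C/Gamma -> R^4 = H conformal immersion with left normal N: *df = N df,
  i.e. f_y = N f_x, with N^2 = -1 (so N is a unit imaginary quaternion), df injective.\<close>
definition conformal_immersion ::
  "complex \<Rightarrow> complex \<Rightarrow> (complex \<Rightarrow> quat) \<Rightarrow> (complex \<Rightarrow> quat) \<Rightarrow> bool" where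
  "conformal_immersion w1 w2 f N \<longleftrightarrow>
     lattice w1 w2 \<and> periodic w1 w2 f \<and> periodic w1 w2 N \<and>
     (\<forall>z. f differentiable (at z)) \<and>
     (\<forall>z. inj (frechet_derivative f (at z))) \<and>
     (\<forall>z. qmul (N z) (N z) = - qone) \<and>
     (\<forall>z. dy f z = qmul (N z) (dx f z))"

definition holomorphic_wrt :: "(complex \<Rightarrow> quat) \<Rightarrow> (complex \<Rightarrow> quat) \<Rightarrow> bool" where
  "holomorphic_wrt N \<alpha> \<longleftrightarrow>
     (\<forall>z. \<alpha> differentiable (at z)) \<and> (\<forall>z. dy \<alpha> z = qmul (N z) (dx \<alpha> z))"

text \<open>H^0: Gamma-periodic holomorphic maps (trivial multiplier)\<close>
definition H0 :: "complex \<Rightarrow> complex \<Rightarrow> (complex \<Rightarrow> quat) \<Rightarrow> (complex \<Rightarrow> quat) set" where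
  "H0 w1 w2 N = {\<alpha>. holomorphic_wrt N \<alpha> \<and> periodic w1 w2 \<alpha>}"

definition cdim_eq_4 :: "(complex \<Rightarrow> quat) set \<Rightarrow> bool" where
  "cdim_eq_4 S \<longleftrightarrow> (\<exists>b :: nat \<Rightarrow> complex \<Rightarrow> quat.
     (\<forall>k<4. b k \<in> S) \<and>
     (\<forall>\<alpha>\<in>S. \<exists>c :: nat \<Rightarrow> complex. \<alpha> = (\<lambda>z. \<Sum>k<4. qmul (b k z) (qcplx (c k)))) \<and>
     (\<forall>c :: nat \<Rightarrow> complex. (\<forall>z. (\<Sum>k<4. qmul (b k z) (qcplx (c k))) = 0) \<longrightarrow> (\<forall>k<4. c k = 0)))"

definition darboux_T ::
  "(complex \<Rightarrow> quat) \<Rightarrow> (complex \<Rightarrow> quat) \<Rightarrow> (complex \<Rightarrow> quat) \<Rightarrow> bool" where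
  "darboux_T f \<alpha> T \<longleftrightarrow> (\<forall>z v. frechet_derivative \<alpha> (at z) v =
       - qmul (frechet_derivative f (at z) v) (qmul (T z) (\<alpha> z)))"

text \<open>HP^1: the point of HP^1 spanned by a nonzero vector of H^2 is the right quaternionic line\<close>
definition hp1_point :: "quat \<times> quat \<Rightarrow> (quat \<times> quat) set" where
  "hp1_point v = {(qmul (fst v) l, qmul (snd v) l) | l. True}"

definition darboux_vec ::
  "(complex \<Rightarrow> quat) \<Rightarrow> (complex \<Rightarrow> quat) \<Rightarrow> (complex \<Rightarrow> quat) \<Rightarrow> complex \<Rightarrow> quat \<times> quat" where
  "darboux_vec f \<alpha> T z = (let \<nu> = qmul (T z) (\<alpha> z) in (qmul (f z) \<nu> + \<alpha> z, \<nu>))"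

definition darboux_transform ::
  "(complex \<Rightarrow> quat) \<Rightarrow> (complex \<Rightarrow> quat) \<Rightarrow> (complex \<Rightarrow> quat) \<Rightarrow> complex \<Rightarrow> (quat \<times> quat) set" where
  "darboux_transform f \<alpha> T z = hp1_point (darboux_vec f \<alpha> T z)"

definition constant_hp1 :: "(complex \<Rightarrow> (quat \<times> quat) set) \<Rightarrow> bool" where
  "constant_hp1 F \<longleftrightarrow> (\<exists>c. c \<noteq> (0,0) \<and> (\<forall>z. F z = hp1_point c))"

end

theory Submission
  imports Defs
begin

text \<open>For \<open>\<alpha> = f a + b\<close> we have \<open>d\<alpha> = df a\<close>, so the defining equation \<open>d\<alpha> = -df \<hat>T \<alpha>\<close> and the
  injectivity of \<open>df\<close> force \<open>\<nu> = \<hat>T \<alpha> = -a\<close>; then \<open>(f\<nu> + \<alpha>, \<nu>) = (b, -a)\<close> is a constant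
  (nonzero) vector, so \<open>\<hat>f\<close> is constant.  For the second claim, \<open>(a, b) \<mapsto> f a + b\<close> is
  an injective real-linear map from \<open>\<bbbH>\<^sup>2\<close> (real dimension 8) into \<open>H\<^sup>0\<close>; if
  \<open>dim\<^sub>\<complex> H\<^sup>0 = 4\<close> it is onto, so every \<open>\<alpha> \<in> H\<^sup>0\<close> lies in \<open>span\<^sub>\<bbbH>{1, f}\<close>.\<close>

lemma qmul_assoc: "qmul (qmul p q) r = qmul p (qmul q r)"
  by (simp add: qmul_def algebra_simps)

lemma qmul_add_right: "qmul d (x + y) = qmul d x + qmul d y"
  by (simp add: qmul_def algebra_simps)

lemma qmul_minus_right: "qmul d (- x) = - qmul d x"
  by (simp add: qmul_def algebra_simps)

lemma qmul_diff_right: "qmul d (x - y) = qmul d x - qmul d y"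
  by (simp add: qmul_def algebra_simps)

lemma qmul_scaleR_right: "qmul d (r *\<^sub>R x) = r *\<^sub>R qmul d x"
  by (simp add: qmul_def algebra_simps scaleR_conv_of_real)

lemma qmul_zero_right [simp]: "qmul d 0 = 0"
  by (simp add: qmul_def zero_prod_def)

lemma bounded_linear_qmul_left: "bounded_linear (\<lambda>x. qmul x a)"
proof -
  have "linear (\<lambda>x. qmul x a)"
    by (rule linearI) (auto simp: qmul_def algebra_simps scaleR_conv_of_real)
  then show ?thesis
    using linear_conv_bounded_linear by blast
qed

lemma qmul_eq_0_imp:
  assumes "qmul d w = 0" and "d \<noteq> 0"
  shows "w = 0"
proof -
  define n where "n = (cmod (fst d))\<^sup>2 + (cmod (snd d))\<^sup>2"
  \<comment> \<open>\<open>(cnj (fst d), - snd d)\<close> is the conjugate \<open>d\<^sup>*\<close>, and \<open>d\<^sup>* d = |d|\<^sup>2\<close>.\<close>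
  have conj_mul: "qmul (cnj (fst d), - snd d) d = (of_real n, 0)"
  proof -
    have "complex_of_real n = fst d * cnj (fst d) + snd d * cnj (snd d)"
      unfolding n_def by (simp only: of_real_add complex_norm_square)
    then show ?thesis
      by (simp add: qmul_def mult.commute)
  qed
  have "qmul (qmul (cnj (fst d), - snd d) d) w = 0"
    using assms(1) by (simp add: qmul_assoc)
  then have "(of_real n * fst w, of_real n * snd w) = (0 :: quat)"
    unfolding conj_mul by (simp add: qmul_def)
  moreover have "n \<noteq> 0"
    using assms(2) unfolding n_def by (cases d) (auto simp: add_nonneg_eq_0_iff zero_prod_def)
  ultimately show ?thesis
    by (cases w) (simp add: zero_prod_def)
qed

lemma qmul_left_cancel: "qmul d x = qmul d y \<Longrightarrow> d \<noteq> 0 \<Longrightarrow> x = y"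
  using qmul_eq_0_imp[of d "x - y"] by (simp add: qmul_diff_right)

lemma has_derivative_qmul_add_const:
  assumes "f differentiable (at z)"
  shows "((\<lambda>z. qmul (f z) a + b) has_derivative (\<lambda>v. qmul (frechet_derivative f (at z) v) a)) (at z)"
proof -
  have "(f has_derivative frechet_derivative f (at z)) (at z)"
    using assms frechet_derivative_works by blast
  from bounded_linear.has_derivative[OF bounded_linear_qmul_left this]
  show ?thesis
    by (rule has_derivative_add_const)
qed

lemma frechet_derivative_qmul_add_const:
  assumes "f differentiable (at z)"
  shows "frechet_derivative (\<lambda>z. qmul (f z) a + b) (at z) = (\<lambda>v. qmul (frechet_derivative f (at z) v) a)"
  using frechet_derivative_at[OF has_derivative_qmul_add_const[OF assms]] by simp

lemma conformal_immersion_differentiable: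
  "conformal_immersion w1 w2 f N \<Longrightarrow> f differentiable (at z)"
  by (simp add: conformal_immersion_def)

lemma conformal_immersion_dx_nonzero:
  assumes "conformal_immersion w1 w2 f N"
  shows "frechet_derivative f (at z) 1 \<noteq> 0"
proof
  assume dx_zero: "frechet_derivative f (at z) 1 = 0"
  have "(f has_derivative frechet_derivative f (at z)) (at z)"
    using assms conformal_immersion_differentiable frechet_derivative_works by blast
  then have "frechet_derivative f (at z) 0 = 0"
    using has_derivative_linear linear_0 by blast
  moreover have "inj (frechet_derivative f (at z))"
    using assms by (simp add: conformal_immersion_def)
  ultimately show False
    using dx_zero by (metis injD zero_neq_one)
qed

lemma conformal_immersion_affine_eq_0_iff:
  assumes "conformal_immersion w1 w2 f N"
  shows "(\<forall>z. qmul (f z) a + b = 0) \<longleftrightarrow> a = 0 \<and> b = 0"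
proof
  assume vanishes: "\<forall>z. qmul (f z) a + b = 0"
  then have "frechet_derivative (\<lambda>z. qmul (f z) a + b) (at 0) = (\<lambda>v. 0)"
    using frechet_derivative_const by (simp add: fun_eq_iff)
  then have "qmul (frechet_derivative f (at 0) 1) a = 0"
    using frechet_derivative_qmul_add_const[OF conformal_immersion_differentiable[OF assms]]
    by metis
  then have "a = 0"
    using qmul_eq_0_imp conformal_immersion_dx_nonzero[OF assms] by blast
  with vanishes show "a = 0 \<and> b = 0"
    by simp
qed simp

lemma affine_in_H0:
  assumes "conformal_immersion w1 w2 f N"
  shows "(\<lambda>z. qmul (f z) a + b) \<in> H0 w1 w2 N"
proof -
  note diff = conformal_immersion_differentiable[OF assms]
  have "(\<lambda>z. qmul (f z) a + b) differentiable (at z)" for z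
    using has_derivative_qmul_add_const[OF diff] differentiable_def by blast
  moreover have "dy (\<lambda>z. qmul (f z) a + b) z = qmul (N z) (dx (\<lambda>z. qmul (f z) a + b) z)" for z
  proof -
    have "dy f z = qmul (N z) (dx f z)"
      using assms by (simp add: conformal_immersion_def)
    then show ?thesis
      unfolding dx_def dy_def frechet_derivative_qmul_add_const[OF diff] by (simp add: qmul_assoc)
  qed
  moreover have "periodic w1 w2 (\<lambda>z. qmul (f z) a + b)"
    using assms by (simp add: conformal_immersion_def periodic_def)
  ultimately show ?thesis
    by (simp add: H0_def holomorphic_wrt_def)
qed

lemma darboux_T_affine:
  assumes "conformal_immersion w1 w2 f N" and "darboux_T f (\<lambda>z. qmul (f z) a + b) T"
  shows "qmul (T z) (qmul (f z) a + b) = - a"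
proof -
  let ?df1 = "frechet_derivative f (at z) 1"
  have "qmul ?df1 a = - qmul ?df1 (qmul (T z) (qmul (f z) a + b))"
    using assms(2) frechet_derivative_qmul_add_const[OF conformal_immersion_differentiable[OF assms(1)]]
    unfolding darboux_T_def by metis
  then have "qmul ?df1 a = qmul ?df1 (- qmul (T z) (qmul (f z) a + b))"
    by (simp add: qmul_minus_right)
  from qmul_left_cancel[OF this conformal_immersion_dx_nonzero[OF assms(1)]]
  show ?thesis
    by (metis minus_minus)
qed

theorem darboux_transform_affine_constant:
  assumes "conformal_immersion w1 w2 f N"
    and "\<forall>z. qmul (f z) a + b \<noteq> 0"
    and "darboux_T f (\<lambda>z. qmul (f z) a + b) T"
  shows "constant_hp1 (darboux_transform f (\<lambda>z. qmul (f z) a + b) T)"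
proof -
  have "darboux_vec f (\<lambda>z. qmul (f z) a + b) T z = (b, - a)" for z
    using darboux_T_affine[OF assms(1,3)] by (simp add: darboux_vec_def qmul_minus_right)
  moreover have "(b, - a) \<noteq> (0, 0)"
    using assms(2) by auto
  ultimately show ?thesis
    unfolding constant_hp1_def darboux_transform_def by (intro exI[of _ "(b, - a)"]) simp
qed

definition ccomb4 :: "(nat \<Rightarrow> complex \<Rightarrow> quat) \<Rightarrow> (nat \<Rightarrow> complex) \<Rightarrow> complex \<Rightarrow> quat" where
  "ccomb4 bs c = (\<lambda>z. \<Sum>k<4. qmul (bs k z) (qcplx (c k)))"

text \<open>Coefficients in \<open>\<complex>\<^sup>4\<close> are read as points of the 8-dimensional real space \<open>\<bbbH>\<^sup>2\<close>, where an
  injective linear self-map is onto.\<close>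
definition coeffs_to_quat2 :: "(nat \<Rightarrow> complex) \<Rightarrow> quat \<times> quat" where
  "coeffs_to_quat2 c = ((c 0, c 1), (c 2, c 3))"

lemma coeffs_to_quat2_eq_iff: "coeffs_to_quat2 c = coeffs_to_quat2 d \<longleftrightarrow> (\<forall>k<4. c k = d k)"
proof -
  have "k = 0 \<or> k = 1 \<or> k = 2 \<or> k = 3" if "(k::nat) < 4" for k
    using that by arith
  then show ?thesis
    by (auto simp: coeffs_to_quat2_def)
qed

lemma coeffs_to_quat2_add: "coeffs_to_quat2 (\<lambda>k. c k + d k) = coeffs_to_quat2 c + coeffs_to_quat2 d"
  by (simp add: coeffs_to_quat2_def)

lemma coeffs_to_quat2_scale: "coeffs_to_quat2 (\<lambda>k. of_real r * c k) = r *\<^sub>R coeffs_to_quat2 c"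
  by (simp add: coeffs_to_quat2_def scaleR_conv_of_real)

lemma qcplx_add: "qcplx (x + y) = qcplx x + qcplx y"
  by (simp add: qcplx_def)

lemma qcplx_diff: "qcplx (x - y) = qcplx x - qcplx y"
  by (simp add: qcplx_def)

lemma qcplx_of_real_mult: "qcplx (of_real r * x) = r *\<^sub>R qcplx x"
  by (simp add: qcplx_def scaleR_conv_of_real)

lemma ccomb4_add: "ccomb4 bs (\<lambda>k. c k + d k) z = ccomb4 bs c z + ccomb4 bs d z"
  by (simp add: ccomb4_def qcplx_add qmul_add_right sum.distrib)

lemma ccomb4_diff: "ccomb4 bs (\<lambda>k. c k - d k) z = ccomb4 bs c z - ccomb4 bs d z"
  by (simp add: ccomb4_def qcplx_diff qmul_diff_right sum_subtractf)

lemma ccomb4_scale: "ccomb4 bs (\<lambda>k. of_real r * c k) z = r *\<^sub>R ccomb4 bs c z"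
  by (simp add: ccomb4_def qcplx_of_real_mult qmul_scaleR_right scaleR_sum_right)

lemma ccomb4_cong: "\<forall>k<4. c k = d k \<Longrightarrow> ccomb4 bs c = ccomb4 bs d"
  by (auto simp: ccomb4_def intro!: sum.cong)

lemma cdim_eq_4_surj_of_inj:
  fixes g :: "quat \<times> quat \<Rightarrow> complex \<Rightarrow> quat"
  assumes cdim: "cdim_eq_4 S"
    and into: "\<And>p. g p \<in> S"
    and add: "\<And>p q z. g (p + q) z = g p z + g q z"
    and scale: "\<And>r p z. g (r *\<^sub>R p) z = r *\<^sub>R g p z"
    and inj: "\<And>p. (\<forall>z. g p z = 0) \<Longrightarrow> p = 0"
    and "\<alpha> \<in> S"
  shows "\<exists>p. \<alpha> = g p"
proof -
  obtain bs where spans: "\<forall>\<alpha>\<in>S. \<exists>c. \<alpha> = ccomb4 bs c"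
    and indep: "\<forall>c. (\<forall>z. ccomb4 bs c z = 0) \<longrightarrow> (\<forall>k<4. c k = 0)"
    using cdim unfolding cdim_eq_4_def ccomb4_def by blast
  have coeffs_unique: "coeffs_to_quat2 c = coeffs_to_quat2 d" if "ccomb4 bs c = ccomb4 bs d" for c d
    using that indep[rule_format, of "\<lambda>k. c k - d k"] by (simp add: ccomb4_diff coeffs_to_quat2_eq_iff)
  define coeffs where "coeffs p = (SOME c. g p = ccomb4 bs c)" for p
  have g_coeffs: "g p = ccomb4 bs (coeffs p)" for p
  proof -
    have "\<exists>c. g p = ccomb4 bs c"
      using spans into by blast
    then show ?thesis
      unfolding coeffs_def by (rule someI_ex)
  qed
  define L where "L p = coeffs_to_quat2 (coeffs p)" for p
  have "linear L"
  proof (rule linearI)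
    fix p q
    have "ccomb4 bs (coeffs (p + q)) = ccomb4 bs (\<lambda>k. coeffs p k + coeffs q k)"
      using add[of p q] unfolding fun_eq_iff ccomb4_add by (simp add: g_coeffs)
    then show "L (p + q) = L p + L q"
      unfolding L_def coeffs_to_quat2_add[symmetric] by (rule coeffs_unique)
  next
    fix r p
    have "ccomb4 bs (coeffs (r *\<^sub>R p)) = ccomb4 bs (\<lambda>k. of_real r * coeffs p k)"
      using scale[of r p] unfolding fun_eq_iff ccomb4_scale by (simp add: g_coeffs)
    then show "L (r *\<^sub>R p) = r *\<^sub>R L p"
      unfolding L_def coeffs_to_quat2_scale[symmetric] by (rule coeffs_unique)
  qed
  moreover have "inj L"
    unfolding linear_injective_0[OF \<open>linear L\<close>]
  proof (intro allI impI)
    fix p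
    assume "L p = 0"
    then have "coeffs_to_quat2 (coeffs p) = coeffs_to_quat2 (\<lambda>k. 0)"
      by (simp add: L_def coeffs_to_quat2_def zero_prod_def)
    then have "g p = ccomb4 bs (\<lambda>k. 0)"
      unfolding coeffs_to_quat2_eq_iff g_coeffs by (rule ccomb4_cong)
    then show "p = 0"
      by (intro inj) (simp add: ccomb4_def qcplx_def flip: zero_prod_def)
  qed
  ultimately have "surj L"
    using linear_injective_imp_surjective by blast
  obtain c where "\<alpha> = ccomb4 bs c"
    using spans \<open>\<alpha> \<in> S\<close> by blast
  moreover obtain p where "L p = coeffs_to_quat2 c"
    using \<open>surj L\<close> by (metis surjD)
  ultimately have "\<alpha> = g p"
    unfolding L_def coeffs_to_quat2_eq_iff g_coeffs by (metis ccomb4_cong)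
  then show ?thesis
    by blast
qed

lemma H0_eq_affine_if_cdim_eq_4:
  assumes ci: "conformal_immersion w1 w2 f N" and "cdim_eq_4 (H0 w1 w2 N)"
    and "\<alpha> \<in> H0 w1 w2 N"
  shows "\<exists>a b. \<alpha> = (\<lambda>z. qmul (f z) a + b)"
proof -
  let ?g = "\<lambda>p z. qmul (f z) (fst p) + snd p"
  have "\<exists>p. \<alpha> = ?g p"
  proof (rule cdim_eq_4_surj_of_inj[where g = ?g, OF assms(2) affine_in_H0[OF ci] _ _ _ assms(3)])
    fix p q :: "quat \<times> quat" and r :: real and z
    show "?g (p + q) z = ?g p z + ?g q z"
      by (simp add: qmul_add_right)
    show "?g (r *\<^sub>R p) z = r *\<^sub>R ?g p z"
      by (simp add: qmul_scaleR_right scaleR_add_right)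
  next
    fix p :: "quat \<times> quat"
    assume "\<forall>z. ?g p z = 0"
    then have "fst p = 0 \<and> snd p = 0"
      using conformal_immersion_affine_eq_0_iff[OF ci] by blast
    then show "p = 0"
      by (simp add: prod_eq_iff)
  qed
  then show ?thesis
    by blast
qed

theorem corollary3p5:
  fixes w1 w2 :: complex and f N :: "complex \<Rightarrow> quat"
  assumes "conformal_immersion w1 w2 f N"
  shows "(\<forall>a b T. (\<forall>z. qmul (f z) a + b \<noteq> 0) \<longrightarrow>
            darboux_T f (\<lambda>z. qmul (f z) a + b) T \<longrightarrow>
            constant_hp1 (darboux_transform f (\<lambda>z. qmul (f z) a + b) T))
       \<and> (cdim_eq_4 (H0 w1 w2 N) \<longrightarrow>
            (\<forall>\<alpha>\<in>H0 w1 w2 N. \<forall>T. (\<forall>z. \<alpha> z \<noteq> 0) \<longrightarrow> darboux_T f \<alpha> T \<longrightarrow>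
               constant_hp1 (darboux_transform f \<alpha> T)))"
proof (intro conjI allI impI ballI)
  fix a b T
  assume "\<forall>z. qmul (f z) a + b \<noteq> 0" and "darboux_T f (\<lambda>z. qmul (f z) a + b) T"
  with assms show "constant_hp1 (darboux_transform f (\<lambda>z. qmul (f z) a + b) T)"
    by (rule darboux_transform_affine_constant)
next
  fix \<alpha> T
  assume "cdim_eq_4 (H0 w1 w2 N)" and "\<alpha> \<in> H0 w1 w2 N"
    and nonzero: "\<forall>z. \<alpha> z \<noteq> 0" and darboux: "darboux_T f \<alpha> T"
  then obtain a b where affine: "\<alpha> = (\<lambda>z. qmul (f z) a + b)"
    using H0_eq_affine_if_cdim_eq_4[OF assms] by blast
  show "constant_hp1 (darboux_transform f \<alpha> T)"
    using darboux_transform_affine_constant[OF assms] nonzero darboux unfolding affine by blast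
qed

end
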